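(* Let $T,\ell$ be positive integers, $\sigma\in(0,1]$ and $\delta\in(0,1)$. Let $u_1,\dots,u_T:[0,1]\to\mathbb{R}$ be piecewise Lipschitz functions, each with $\ell$ discontinuities, and let the discontinuities $d_{i,j}$ ($i\in[T]$, $j\in[\ell]$) of the $u_i$ be sampled from an adaptive sequence of $\sigma$-smooth distributions on $[0,1]$. Then for any $\alpha\ge 0.5$, with probability at least $1-\delta$ the sequence $u_1,\dots,u_T$ is $(w,k)$-dispersed for $$w=\sigma(T\ell)^{\alpha-1}\quad\text{and}\quad k=\tilde O\!\left((T\ell)^{\alpha}\ln\!\left(\frac1\delta\right)+\ln\!\left(\frac1\sigma\right)\right).$$
   Context: A distribution $\mu$ on $[0,1]$ is $\sigma$-smooth if $\mu(A)\le \mathcal{U}(A)/\sigma$ for all measurable $A$, where $\mathcal{U}$ is the uniform (Lebesgue) distribution on $[0,1]$. An adaptive sequence of $\sigma$-smooth distributions generates the points one at a time, each from a $\sigma$-smooth distribution chosen as a function of the previously realized points. If $u_i$ is piecewise Lipschitz over a partition $\mathcal{P}_i$ of $[0,1]$ (the pieces delimited by its discontinuities), $\mathcal{P}_i$ splits a set $A$ if $A$ intersects at least two sets of $\mathcal{P}_i$; the collection $u_1,\dots,u_T$ is $(w,k)$-dispersed if every interval of width $w$ is split by at most $k$ of the partitions $\mathcal{P}_1,\dots,\mathcal{P}_T$. $\tilde O$ hides polylogarithmic factors. *)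

theory Defs
  imports "HOL-Probability.Probability"
begin

text \<open>Pieces of [0,1] delimited by a finite set D of discontinuities: two points are in the
  same piece iff no discontinuity d satisfies min x y < d <= max x y (so every discontinuity
  starts a new piece, pieces are of the form [d_j, d_(j+1))).\<close>
definition same_piece :: "real set \<Rightarrow> real \<Rightarrow> real \<Rightarrow> bool" where
  "same_piece D x y \<longleftrightarrow> x \<in> {0..1} \<and> y \<in> {0..1} \<and>
      (\<forall>d\<in>D. \<not> (min x y < d \<and> d \<le> max x y))"

definition induced_partition :: "real set \<Rightarrow> real set set" where
  "induced_partition D = {0..1::real} // {(x, y). same_piece D x y}"

definition splits :: "real set set \<Rightarrow> real set \<Rightarrow> bool" where
  "splits P A \<longleftrightarrow> (\<exists>p\<in>P. \<exists>q\<in>P. p \<noteq> q \<and> p \<inter> A \<noteq> {} \<and> q \<inter> A \<noteq> {})"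

definition dispersed :: "(nat \<Rightarrow> real set set) \<Rightarrow> nat \<Rightarrow> real \<Rightarrow> nat \<Rightarrow> bool" where
  "dispersed P T w k \<longleftrightarrow> (\<forall>a::real. card {i \<in> {..<T}. splits (P i) {a..a + w}} \<le> k)"

text \<open>sigma-smooth distribution on [0,1]: mu(A) <= U(A)/sigma with U uniform on [0,1].\<close>
definition smooth_bound :: "real \<Rightarrow> real set \<Rightarrow> real" where
  "smooth_bound \<sigma> A = measure lborel (A \<inter> {0..1}) / \<sigma>"

text \<open>Joint law P (on coordinates 0..n-1) of an adaptive sequence of sigma-smooth
  distributions: for each m < n, the conditional law of coordinate m given coordinates
  0..m-1 is sigma-smooth, i.e. for every Borel A and every event B about the history,
  P(history in B and x_m in A) <= U(A)/sigma * P(history in B).\<close>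
definition adaptive_smooth_law :: "real \<Rightarrow> nat \<Rightarrow> (nat \<Rightarrow> real) measure \<Rightarrow> bool" where
  "adaptive_smooth_law \<sigma> n P \<longleftrightarrow>
     prob_space P \<and> sets P = sets (PiM {..<n} (\<lambda>_. borel)) \<and>
     (\<forall>m<n. \<forall>A\<in>sets borel. \<forall>B\<in>sets (PiM {..<m} (\<lambda>_. borel :: real measure)).
        measure P {x \<in> space P. restrict x {..<m} \<in> B \<and> x m \<in> A}
          \<le> smooth_bound \<sigma> A * measure P {x \<in> space P. restrict x {..<m} \<in> B})"

text \<open>Discontinuity set of function i (0-based) in the sampled vector x: the points
  d_(i,j) = x (i*l + j), j < l (sampled in lexicographic order of (i,j)).\<close>
definition discs :: "nat \<Rightarrow> (nat \<Rightarrow> real) \<Rightarrow> nat \<Rightarrow> real set" where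
  "discs l x i = {x (i * l + j) | j. j < l}"

end

theory Submission
  imports Defs
begin

text \<open>
  Cover [0,1] by the grid intervals [t w, (t + 2) w], t = -1, ..., floor (1/w): every interval
  of width w that contains a discontinuity in (0,1] lies inside one of them. Whatever the history,
  a sample falls into a fixed grid interval with conditional probability at most 2w/\<sigma>, so r
  prescribed samples all fall into it with probability at most (2w/\<sigma>)^r. A union bound over
  the r-subsets of the N = T l samples and over the grid intervals shows that some grid interval
  receives r samples with probability at most (1/w + 2) (2Nw/\<sigma>)^r / r!. For
  w = \<sigma> N^(\<alpha> - 1) the mean 2Nw/\<sigma> is 2N^\<alpha>, so taking r of order N^\<alpha> + ln (N/(\<sigma>\<delta>))
  makes this at most \<delta>; off this event every interval of width w is split by fewer than r of
  the partitions.
\<close>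

lemma power_div_fact_le_exp:
  fixes x :: real
  assumes "0 \<le> x"
  shows "x ^ n / fact n \<le> exp x"
proof -
  have "x ^ n / fact n \<le> (\<Sum>k\<le>n. x ^ k / fact k)"
    by (rule member_le_sum) (use assms in auto)
  also have "\<dots> \<le> exp x"
    using assms summable_exp_generic[of x]
    by (auto simp: exp_def divide_inverse ac_simps intro!: sum_le_suminf)
  finally show ?thesis .
qed

lemma power_div_fact_le_exp_minus:
  fixes \<mu> :: real
  assumes "0 \<le> \<mu>" and r: "exp 2 * \<mu> \<le> real r"
  shows "\<mu> ^ r / fact r \<le> exp (- real r)"
proof (cases "r = 0")
  case False
  then have rpos: "real r > 0" by simp
  have "real r ^ r / exp (real r) \<le> fact r"
    using power_div_fact_le_exp[of "real r" r] rpos by (simp add: field_simps)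
  then have "\<mu> ^ r / fact r \<le> \<mu> ^ r / (real r ^ r / exp (real r))"
    using assms rpos by (intro divide_left_mono) auto
  also have "\<dots> = (\<mu> * exp 1 / real r) ^ r"
    using rpos by (simp add: field_simps power_divide flip: exp_of_nat_mult)
  also have "\<dots> \<le> exp (- 1) ^ r"
  proof (rule power_mono)
    have "\<mu> * exp 1 * exp 1 \<le> real r"
      using r by (simp add: ac_simps flip: exp_add)
    then show "\<mu> * exp 1 / real r \<le> exp (- 1)"
      using rpos by (simp add: exp_minus field_simps)
  qed (use assms rpos in auto)
  also have "\<dots> = exp (- real r)"
    by (simp flip: exp_of_nat_mult)
  finally show ?thesis .
qed simp

lemma binomial_mult_power_le:
  fixes q :: real
  assumes "0 \<le> q"
  shows "real (N choose r) * q ^ r \<le> (real N * q) ^ r / fact r"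
proof -
  have "real ((N choose r) * fact r) \<le> real (N ^ r)"
    by (simp only: of_nat_le_iff binomial_fact_pow)
  then have "real (N choose r) * fact r * q ^ r \<le> real N ^ r * q ^ r"
    using assms by (intro mult_right_mono) auto
  then show ?thesis
    by (simp add: field_simps power_mult_distrib)
qed

lemma sets_PiM_Collect_all_in:
  fixes I :: "real set" and n :: nat
  assumes I: "I \<in> sets borel" and S: "S \<subseteq> {..<n}"
  shows "{y \<in> space (PiM {..<n} (\<lambda>_. borel)). \<forall>j\<in>S. y j \<in> I} \<in> sets (PiM {..<n} (\<lambda>_. borel))"
proof -
  have "finite S" using finite_subset[OF S] by simp
  then show ?thesis
    using I by measurable (use S in auto)
qed

lemma smooth_bound_nonneg: "0 \<le> \<sigma> \<Longrightarrow> 0 \<le> smooth_bound \<sigma> A"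
  by (simp add: smooth_bound_def)

lemma adaptive_smooth_law_sets:
  assumes "adaptive_smooth_law \<sigma> N P"
  shows "sets P = sets (PiM {..<N} (\<lambda>_. borel :: real measure))"
    and "space P = space (PiM {..<N} (\<lambda>_. borel :: real measure))"
  using assms sets_eq_imp_space_eq unfolding adaptive_smooth_law_def by metis+

lemma adaptive_smooth_law_prob_all_in_le:
  fixes I :: "real set"
  assumes law: "adaptive_smooth_law \<sigma> N P" and \<sigma>: "0 \<le> \<sigma>" and I: "I \<in> sets borel"
    and S: "S \<subseteq> {..<N}"
  shows "measure P {x \<in> space P. \<forall>j\<in>S. x j \<in> I} \<le> smooth_bound \<sigma> I ^ card S"
proof -
  have "measure P {x \<in> space P. \<forall>j\<in>S. x j \<in> I} \<le> smooth_bound \<sigma> I ^ card S"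
    if "n \<le> N" "S \<subseteq> {..<n}" for n S
    using that
  proof (induction n arbitrary: S)
    case 0
    then show ?case
      using law by (simp add: adaptive_smooth_law_def prob_space.prob_le_1)
  next
    case (Suc n)
    show ?case
    proof (cases "n \<in> S")
      case False
      with Suc.prems have "S \<subseteq> {..<n}" by (auto simp: less_Suc_eq)
      with Suc show ?thesis by simp
    next
      case True
      define S' where "S' = S - {n}"
      have S': "S' \<subseteq> {..<n}"
        using Suc.prems(2) by (auto simp: S'_def)
      have card_S: "card S = Suc (card S')"
        using card_Suc_Diff1[OF finite_subset[OF Suc.prems(2) finite_lessThan] True]
        by (simp add: S'_def)
      define B where "B = {y \<in> space (PiM {..<n} (\<lambda>_. borel :: real measure)). \<forall>j\<in>S'. y j \<in> I}"
      have "B \<in> sets (PiM {..<n} (\<lambda>_. borel))"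
        unfolding B_def using I S' by (rule sets_PiM_Collect_all_in)
      then have "measure P {x \<in> space P. restrict x {..<n} \<in> B \<and> x n \<in> I}
          \<le> smooth_bound \<sigma> I * measure P {x \<in> space P. restrict x {..<n} \<in> B}"
        using law I Suc.prems(1) unfolding adaptive_smooth_law_def by simp
      also have "{x \<in> space P. restrict x {..<n} \<in> B} = {x \<in> space P. \<forall>j\<in>S'. x j \<in> I}"
        using S' by (auto simp: B_def space_PiM)
      also have "{x \<in> space P. restrict x {..<n} \<in> B \<and> x n \<in> I} = {x \<in> space P. \<forall>j\<in>S. x j \<in> I}"
        using S' True by (auto simp: B_def S'_def space_PiM)
      also have "smooth_bound \<sigma> I * measure P {x \<in> space P. \<forall>j\<in>S'. x j \<in> I}
          \<le> smooth_bound \<sigma> I * smooth_bound \<sigma> I ^ card S'"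
        using Suc.IH[OF _ S'] Suc.prems(1) \<sigma> by (simp add: mult_left_mono smooth_bound_nonneg)
      finally show ?thesis
        by (simp add: card_S)
    qed
  qed
  then show ?thesis
    using S by blast
qed

lemma adaptive_smooth_law_prob_many_in_le:
  fixes I :: "real set" and r :: nat
  assumes law: "adaptive_smooth_law \<sigma> N P" and \<sigma>: "0 \<le> \<sigma>" and I: "I \<in> sets borel"
  defines "A \<equiv> {x \<in> space P. r \<le> card {n \<in> {..<N}. x n \<in> I}}"
  shows "A \<in> sets P" and "measure P A \<le> (real N * smooth_bound \<sigma> I) ^ r / fact r"
proof -
  let ?Ss = "{S. S \<subseteq> {..<N} \<and> card S = r}"
  have A_eq: "A = (\<Union>S\<in>?Ss. {x \<in> space P. \<forall>j\<in>S. x j \<in> I})"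
  proof (intro equalityI subsetI)
    fix x
    assume x: "x \<in> A"
    then have "r \<le> card {n \<in> {..<N}. x n \<in> I}"
      unfolding A_def by simp
    then obtain S where "S \<subseteq> {n \<in> {..<N}. x n \<in> I}" "card S = r"
      by (meson obtain_subset_with_card_n)
    with x show "x \<in> (\<Union>S\<in>?Ss. {x \<in> space P. \<forall>j\<in>S. x j \<in> I})"
      unfolding A_def by blast
  next
    fix x
    assume "x \<in> (\<Union>S\<in>?Ss. {x \<in> space P. \<forall>j\<in>S. x j \<in> I})"
    then obtain S where S: "S \<subseteq> {n \<in> {..<N}. x n \<in> I}" "card S = r" "x \<in> space P"
      by blast
    then show "x \<in> A"
      using card_mono[OF _ S(1)] unfolding A_def by simp
  qed
  have finite_Ss: "finite ?Ss"
    by (rule finite_subset[of _ "Pow {..<N}"]) auto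
  have all_in_sets: "{x \<in> space P. \<forall>j\<in>S. x j \<in> I} \<in> sets P" if "S \<subseteq> {..<N}" for S
    using sets_PiM_Collect_all_in[OF I that] adaptive_smooth_law_sets[OF law] by simp
  show "A \<in> sets P"
    unfolding A_eq using finite_Ss all_in_sets by auto
  have "measure P A \<le> (\<Sum>S\<in>?Ss. measure P {x \<in> space P. \<forall>j\<in>S. x j \<in> I})"
    unfolding A_eq by (rule measure_UNION_le[OF finite_Ss]) (use all_in_sets in auto)
  also have "\<dots> \<le> real (card ?Ss) * smooth_bound \<sigma> I ^ r"
    by (rule sum_bounded_above) (use adaptive_smooth_law_prob_all_in_le[OF law \<sigma> I] in auto)
  also have "\<dots> = real (N choose r) * smooth_bound \<sigma> I ^ r"
    using n_subsets[of "{..<N}" r] by simp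
  also have "\<dots> \<le> (real N * smooth_bound \<sigma> I) ^ r / fact r"
    by (rule binomial_mult_power_le) (rule smooth_bound_nonneg[OF \<sigma>])
  finally show "measure P A \<le> (real N * smooth_bound \<sigma> I) ^ r / fact r" .
qed

lemma equiv_same_piece: "equiv {0..1} {(x, y). same_piece D x y}"
proof (rule equivI)
  show "{(x, y). same_piece D x y} \<subseteq> {0..1} \<times> {0..1}"
    by (auto simp: same_piece_def)
  show "refl_on {0..1} {(x, y). same_piece D x y}"
    by (auto simp: refl_on_def same_piece_def)
  show "sym {(x, y). same_piece D x y}"
    by (auto simp: sym_def same_piece_def min.commute max.commute)
  show "trans {(x, y). same_piece D x y}"
    unfolding trans_def same_piece_def by (auto simp: min_def max_def)
qed

lemma splits_induced_partitionE:
  assumes "splits (induced_partition D) {a..b}"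
  obtains d where "d \<in> D" "a < d" "d \<le> b" "0 < d" "d \<le> 1"
proof -
  let ?R = "{(x, y). same_piece D x y}"
  obtain p q x y where p: "p \<in> {0..1} // ?R" and q: "q \<in> {0..1} // ?R" and "p \<noteq> q"
    and x: "x \<in> p" "x \<in> {a..b}" and y: "y \<in> q" "y \<in> {a..b}"
    using assms unfolding splits_def induced_partition_def by blast
  have "\<not> same_piece D x y"
    using quotient_eq_iff[OF equiv_same_piece p q x(1) y(1)] \<open>p \<noteq> q\<close> by simp
  moreover have "x \<in> {0..1}" "y \<in> {0..1}"
    using in_quotient_imp_subset[OF equiv_same_piece] p q x y by blast+
  ultimately obtain d where "d \<in> D" "min x y < d" "d \<le> max x y"
    unfolding same_piece_def by blast
  with x y \<open>x \<in> {0..1}\<close> \<open>y \<in> {0..1}\<close> show ?thesis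
    by (intro that) auto
qed

lemma card_splitting_le_card_samples_in:
  assumes "0 < l" and "{a..b} \<subseteq> J"
  shows "card {i \<in> {..<T}. splits (induced_partition (discs l x i)) {a..b}}
    \<le> card {n \<in> {..<T * l}. x n \<in> J}"
proof -
  have "{i \<in> {..<T}. splits (induced_partition (discs l x i)) {a..b}}
    \<subseteq> (\<lambda>n. n div l) ` {n \<in> {..<T * l}. x n \<in> J}"
  proof
    fix i
    assume "i \<in> {i \<in> {..<T}. splits (induced_partition (discs l x i)) {a..b}}"
    then have i: "i < T" and "splits (induced_partition (discs l x i)) {a..b}"
      by auto
    then obtain d where "d \<in> discs l x i" "a < d" "d \<le> b"
      by (auto elim: splits_induced_partitionE)
    then obtain j where j: "j < l" "x (i * l + j) \<in> {a..b}"
      unfolding discs_def by auto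
    have "i * l + j < (i + 1) * l"
      using j by simp
    also have "\<dots> \<le> T * l"
      using i by (intro mult_le_mono1) simp
    finally have "i * l + j < T * l" .
    moreover have "(i * l + j) div l = i"
      using j by simp
    ultimately show "i \<in> (\<lambda>n. n div l) ` {n \<in> {..<T * l}. x n \<in> J}"
      using j assms(2) by (intro image_eqI[of _ _ "i * l + j"]) auto
  qed
  then have "card {i \<in> {..<T}. splits (induced_partition (discs l x i)) {a..b}}
    \<le> card ((\<lambda>n. n div l) ` {n \<in> {..<T * l}. x n \<in> J})"
    by (intro card_mono) simp_all
  also have "\<dots> \<le> card {n \<in> {..<T * l}. x n \<in> J}"
    by (rule card_image_le) simp
  finally show ?thesis .
qed

definition grid_interval :: "real \<Rightarrow> int \<Rightarrow> real set" where
  "grid_interval w t = {of_int t * w .. (of_int t + 2) * w}"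

lemma smooth_bound_grid_interval:
  assumes "0 < \<sigma>" and "0 \<le> w"
  shows "smooth_bound \<sigma> (grid_interval w t) \<le> 2 * w / \<sigma>"
proof -
  have "measure lborel (grid_interval w t \<inter> {0..1}) \<le> 2 * w"
    using assms by (auto simp: grid_interval_def algebra_simps min_def max_def)
  then show ?thesis
    unfolding smooth_bound_def using assms by (simp add: divide_right_mono)
qed

lemma Icc_subset_grid_interval:
  assumes "0 < w" and "- w < a" and "a \<le> 1"
  obtains t where "t \<in> {-1..\<lfloor>1 / w\<rfloor>}" and "{a..a + w} \<subseteq> grid_interval w t"
proof
  let ?t = "\<lfloor>a / w\<rfloor>"
  have "- 1 < a / w"
    using assms by (simp add: field_simps)
  then have "- 1 \<le> ?t"
    by (simp add: le_floor_iff)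
  moreover have "?t \<le> \<lfloor>1 / w\<rfloor>"
    using assms by (intro floor_mono divide_right_mono) simp_all
  ultimately show "?t \<in> {-1..\<lfloor>1 / w\<rfloor>}"
    by simp
  have "of_int ?t * w \<le> a / w * w" and "a / w * w < (of_int ?t + 1) * w"
    using assms(1) by (intro mult_right_mono mult_strict_right_mono; linarith)+
  then have "of_int ?t * w \<le> a" and "a < (of_int ?t + 1) * w"
    using assms(1) by simp_all
  then show "{a..a + w} \<subseteq> grid_interval w ?t"
    by (auto simp: grid_interval_def algebra_simps)
qed

lemma dispersed_if_grid_sparse:
  assumes "0 < l" and "0 < w"
    and sparse: "\<And>t. t \<in> {-1..\<lfloor>1 / w\<rfloor>} \<Longrightarrow> card {n \<in> {..<T * l}. x n \<in> grid_interval w t} < r"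
  shows "dispersed (\<lambda>i. induced_partition (discs l x i)) T w r"
  unfolding dispersed_def
proof
  fix a :: real
  let ?S = "{i \<in> {..<T}. splits (induced_partition (discs l x i)) {a..a + w}}"
  show "card ?S \<le> r"
  proof (cases "?S = {}")
    case True
    then show ?thesis
      by (simp only: card.empty le0)
  next
    case False
    then obtain i d where "d \<in> discs l x i" "a < d" "d \<le> a + w" "0 < d" "d \<le> 1"
      by (auto elim: splits_induced_partitionE)
    then have "- w < a" "a \<le> 1"
      by linarith+
    with \<open>0 < w\<close> obtain t where t: "t \<in> {-1..\<lfloor>1 / w\<rfloor>}" "{a..a + w} \<subseteq> grid_interval w t"
      by (rule Icc_subset_grid_interval)
    have "card ?S \<le> card {n \<in> {..<T * l}. x n \<in> grid_interval w t}"
      using \<open>0 < l\<close> t(2) by (rule card_splitting_le_card_samples_in)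
    also have "\<dots> < r"
      using sparse[OF t(1)] .
    finally show ?thesis
      by simp
  qed
qed

lemma dispersed_with_high_probability:
  fixes r :: nat
  assumes law: "adaptive_smooth_law \<sigma> (T * l) P" and "0 < \<sigma>" "0 < w" "0 < l"
  obtains E where "E \<in> sets P"
    and "1 - (1 / w + 2) * ((real (T * l) * (2 * w / \<sigma>)) ^ r / fact r) \<le> measure P E"
    and "\<And>x. x \<in> E \<Longrightarrow> dispersed (\<lambda>i. induced_partition (discs l x i)) T w r"
proof -
  define N where "N = T * l"
  define G where "G = {-1..\<lfloor>1 / w\<rfloor>}"
  define Bad where "Bad t = {x \<in> space P. r \<le> card {n \<in> {..<N}. x n \<in> grid_interval w t}}" for t
  have lawN: "adaptive_smooth_law \<sigma> N P"
    using law by (simp add: N_def)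
  have grid_borel: "grid_interval w t \<in> sets borel" for t
    by (simp add: grid_interval_def)
  have Bad_sets: "Bad t \<in> sets P" for t
    unfolding Bad_def using lawN _ grid_borel
    by (rule adaptive_smooth_law_prob_many_in_le(1)) (use \<open>0 < \<sigma>\<close> in simp)
  have Bad_le: "measure P (Bad t) \<le> (real N * (2 * w / \<sigma>)) ^ r / fact r" for t
  proof -
    have "measure P (Bad t) \<le> (real N * smooth_bound \<sigma> (grid_interval w t)) ^ r / fact r"
      unfolding Bad_def using lawN _ grid_borel
      by (rule adaptive_smooth_law_prob_many_in_le(2)) (use \<open>0 < \<sigma>\<close> in simp)
    also have "\<dots> \<le> (real N * (2 * w / \<sigma>)) ^ r / fact r"
      using smooth_bound_grid_interval[of \<sigma> w t] smooth_bound_nonneg[of \<sigma>] assms(2,3)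
      by (intro divide_right_mono power_mono mult_left_mono) simp_all
    finally show ?thesis .
  qed
  have "real (card G) = of_int \<lfloor>1 / w\<rfloor> + 2"
    using \<open>0 < w\<close> by (simp add: G_def)
  then have card_G: "real (card G) \<le> 1 / w + 2"
    by linarith
  have "measure P (\<Union>t\<in>G. Bad t) \<le> (\<Sum>t\<in>G. measure P (Bad t))"
    by (rule measure_UNION_le) (simp_all add: G_def Bad_sets)
  also have "\<dots> \<le> real (card G) * ((real N * (2 * w / \<sigma>)) ^ r / fact r)"
    by (rule sum_bounded_above) (rule Bad_le)
  also have "\<dots> \<le> (1 / w + 2) * ((real N * (2 * w / \<sigma>)) ^ r / fact r)"
    using card_G assms(2,3) by (intro mult_right_mono) simp_all
  finally have Bad_union_le: "measure P (\<Union>t\<in>G. Bad t) \<le> (1 / w + 2) * ((real N * (2 * w / \<sigma>)) ^ r / fact r)" .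
  show ?thesis
  proof (rule that)
    have "prob_space P"
      using law by (simp add: adaptive_smooth_law_def)
    moreover have "(\<Union>t\<in>G. Bad t) \<in> sets P"
      using Bad_sets by (auto simp: G_def)
    ultimately show "1 - (1 / w + 2) * ((real (T * l) * (2 * w / \<sigma>)) ^ r / fact r)
        \<le> measure P (space P - (\<Union>t\<in>G. Bad t))"
      using Bad_union_le by (simp add: prob_space.prob_compl N_def)
    show "space P - (\<Union>t\<in>G. Bad t) \<in> sets P"
      using \<open>(\<Union>t\<in>G. Bad t) \<in> sets P\<close> by auto
    fix x
    assume "x \<in> space P - (\<Union>t\<in>G. Bad t)"
    then have "card {n \<in> {..<T * l}. x n \<in> grid_interval w t} < r" if "t \<in> G" for t
      using that by (auto simp: Bad_def N_def)
    then show "dispersed (\<lambda>i. induced_partition (discs l x i)) T w r"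
      using \<open>0 < l\<close> \<open>0 < w\<close> by (intro dispersed_if_grid_sparse) (simp_all add: G_def)
  qed
qed

lemma mult_power_div_fact_le:
  fixes M \<delta> \<mu> :: real
  assumes "0 < \<delta>" "\<delta> \<le> M" "0 \<le> \<mu>" and r: "exp 2 * \<mu> + ln (M / \<delta>) \<le> real r"
  shows "M * (\<mu> ^ r / fact r) \<le> \<delta>"
proof -
  have "0 \<le> ln (M / \<delta>)"
    using assms(1,2) by simp
  then have "\<mu> ^ r / fact r \<le> exp (- real r)"
    using assms(3) r by (intro power_div_fact_le_exp_minus) simp_all
  also have "\<dots> \<le> exp (- ln (M / \<delta>))"
    using r mult_nonneg_nonneg[OF exp_ge_zero[of 2] assms(3)] by simp
  also have "\<dots> = \<delta> / M"
    using assms(1,2) by (simp add: exp_minus)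
  finally show ?thesis
    using assms(1,2) by (simp add: field_simps)
qed

lemma tail_index_le:
  fixes N X M \<sigma> \<delta> :: real
  assumes N: "1 \<le> N" and X: "1 \<le> X" and \<sigma>: "0 < \<sigma>" "\<sigma> \<le> 1" and \<delta>: "0 < \<delta>" "\<delta> < 1"
    and M: "0 < M" "M \<le> 3 * N / \<sigma>"
  shows "exp 2 * (2 * X) + ln (M / \<delta>) + 1
    \<le> 30 * ln (exp 1 + N) * (X * (1 + ln (1 / \<delta>)) + ln (1 / \<sigma>))"
proof -
  define L where "L = ln (exp 1 + N)"
  have L: "1 \<le> L" "ln N \<le> L"
    using N by (simp_all add: L_def ln_ge_iff add_pos_nonneg)
  have "exp (2::real) = exp 1 * exp 1"
    by (simp flip: exp_add)
  also have "\<dots> \<le> 3 * 3"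
    using exp_le by (intro mult_mono) simp_all
  finally have exp2: "exp (2::real) \<le> 9"
    by simp
  have ln3: "ln (3::real) \<le> 2"
    using ln_le_minus_one[of 3] by simp
  have "ln M \<le> ln (3 * N / \<sigma>)"
    using M by simp
  also have "\<dots> = ln 3 + ln N + ln (1 / \<sigma>)"
    using N \<sigma> by (simp add: ln_mult ln_div)
  finally have "ln (M / \<delta>) \<le> ln 3 + ln N + ln (1 / \<sigma>) + ln (1 / \<delta>)"
    using M \<delta> by (simp add: ln_div)
  moreover have "exp 2 * (2 * X) \<le> 18 * X"
    using exp2 X by simp
  ultimately have "exp 2 * (2 * X) + ln (M / \<delta>) + 1
      \<le> 18 * X + ln 3 + ln N + ln (1 / \<sigma>) + ln (1 / \<delta>) + 1"
    by linarith
  also have "\<dots> \<le> 30 * (L * X) + 30 * (L * X * ln (1 / \<delta>)) + 30 * (L * ln (1 / \<sigma>))"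
  proof -
    have LX: "1 \<le> L * X"
      using mult_mono[OF L(1) X order_trans[OF zero_le_one L(1)] zero_le_one] by simp
    have "X \<le> L * X" "L \<le> L * X"
      using L X by (simp_all add: mult_le_cancel_right1 mult_le_cancel_left1)
    moreover have "0 \<le> ln (1 / \<delta>)" "ln (1 / \<delta>) \<le> L * X * ln (1 / \<delta>)"
      using LX \<delta> by (simp_all add: mult_le_cancel_right1)
    moreover have "0 \<le> ln (1 / \<sigma>)" "ln (1 / \<sigma>) \<le> L * ln (1 / \<sigma>)"
      using L \<sigma> by (simp_all add: mult_le_cancel_right1)
    ultimately show ?thesis
      using ln3 L LX by linarith
  qed
  also have "\<dots> = 30 * L * (X * (1 + ln (1 / \<delta>)) + ln (1 / \<sigma>))"
    by (simp add: algebra_simps)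
  finally show ?thesis
    unfolding L_def .
qed

lemma adaptive_smooth_law_dispersed:
  fixes T l :: nat and \<sigma> \<delta> \<alpha> :: real
  assumes "0 < T" "0 < l" "0 < \<sigma>" "\<sigma> \<le> 1" "0 < \<delta>" "\<delta> < 1" "0 \<le> \<alpha>"
    and law: "adaptive_smooth_law \<sigma> (T * l) P"
  obtains E k where "E \<in> sets P" and "1 - \<delta> \<le> measure P E"
    and "real k \<le> 30 * ln (exp 1 + real (T * l))
      * (real (T * l) powr \<alpha> * (1 + ln (1 / \<delta>)) + ln (1 / \<sigma>))"
    and "\<And>x. x \<in> E \<Longrightarrow>
      dispersed (\<lambda>i. induced_partition (discs l x i)) T (\<sigma> * real (T * l) powr (\<alpha> - 1)) k"
proof -
  define N where "N = real (T * l)"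
  define X where "X = N powr \<alpha>"
  define w where "w = \<sigma> * N powr (\<alpha> - 1)"
  define M where "M = 1 / w + 2"
  define r where "r = nat \<lceil>exp 2 * (2 * X) + ln (M / \<delta>)\<rceil>"
  have "1 \<le> T * l"
    using assms(1,2) by (simp add: Suc_le_eq)
  then have N: "1 \<le> N"
    unfolding N_def by (metis of_nat_1 of_nat_le_iff)
  have X: "1 \<le> X"
    using N assms(7) by (simp add: X_def ge_one_powr_ge_zero)
  have w: "0 < w"
    using N assms(3) by (simp add: w_def)
  have NX: "N * (2 * w / \<sigma>) = 2 * X"
    using N assms(3) by (simp add: X_def w_def powr_mult_base)
  have "1 / w = N powr (1 - \<alpha>) / \<sigma>"
    using N by (simp add: w_def powr_diff powr_minus_divide field_simps)
  also have "\<dots> \<le> N / \<sigma>"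
    using N assms(3,7) powr_mono[of "1 - \<alpha>" 1 N] by (simp add: divide_right_mono)
  finally have M: "M \<le> 3 * N / \<sigma>"
    using N assms(3,4) by (simp add: M_def field_simps)
  have "0 < 1 / w"
    using w by simp
  then have \<delta>_le_M: "\<delta> \<le> M"
    using assms(6) unfolding M_def by linarith
  then have "0 \<le> exp 2 * (2 * X) + ln (M / \<delta>)"
    using X assms(5) by simp
  then have r: "exp 2 * (2 * X) + ln (M / \<delta>) \<le> real r" "real r \<le> exp 2 * (2 * X) + ln (M / \<delta>) + 1"
    unfolding r_def by linarith+
  obtain E where E: "E \<in> sets P" "1 - M * ((2 * X) ^ r / fact r) \<le> measure P E"
    "\<And>x. x \<in> E \<Longrightarrow> dispersed (\<lambda>i. induced_partition (discs l x i)) T w r"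
    using dispersed_with_high_probability[OF law assms(3) w assms(2), of r]
    unfolding NX[unfolded N_def] M_def by blast
  have "M * ((2 * X) ^ r / fact r) \<le> \<delta>"
    using assms(5) \<delta>_le_M X r(1) by (intro mult_power_div_fact_le) simp_all
  moreover have "real r \<le> 30 * ln (exp 1 + N) * (X * (1 + ln (1 / \<delta>)) + ln (1 / \<sigma>))"
    using tail_index_le[OF N X assms(3-6) _ M] w r(2) by (simp add: M_def add_pos_pos)
  ultimately show ?thesis
    using E by (intro that[of E r]) (simp_all add: N_def X_def w_def)
qed

theorem mainTheorem7:
  shows "\<exists>C c :: real. C > 0 \<and> c \<ge> 0 \<and>
    (\<forall>(T::nat) (l::nat) (\<sigma>::real) (\<delta>::real) (\<alpha>::real) (P :: (nat \<Rightarrow> real) measure).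
      T > 0 \<longrightarrow> l > 0 \<longrightarrow> 0 < \<sigma> \<longrightarrow> \<sigma> \<le> 1 \<longrightarrow> 0 < \<delta> \<longrightarrow> \<delta> < 1 \<longrightarrow> \<alpha> \<ge> 1/2 \<longrightarrow>
      adaptive_smooth_law \<sigma> (T * l) P \<longrightarrow>
      (\<exists>E \<in> sets P. measure P E \<ge> 1 - \<delta> \<and>
         (\<forall>x\<in>E. \<exists>k::nat.
            real k \<le> C * (ln (exp 1 + real (T * l))) powr c *
                      (real (T * l) powr \<alpha> * (1 + ln (1 / \<delta>)) + ln (1 / \<sigma>)) \<and>
            dispersed (\<lambda>i. induced_partition (discs l x i)) T
                      (\<sigma> * real (T * l) powr (\<alpha> - 1)) k)))"
proof (rule exI[of _ 30], rule exI[of _ 1], intro conjI allI impI)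
  fix T l :: nat and \<sigma> \<delta> \<alpha> :: real and P :: "(nat \<Rightarrow> real) measure"
  assume params: "0 < T" "0 < l" "0 < \<sigma>" "\<sigma> \<le> 1" "0 < \<delta>" "\<delta> < 1"
    and "1 / 2 \<le> \<alpha>" and law: "adaptive_smooth_law \<sigma> (T * l) P"
  then have "0 \<le> \<alpha>"
    by simp
  obtain E k where E: "E \<in> sets P" "1 - \<delta> \<le> measure P E"
    and k: "real k \<le> 30 * ln (exp 1 + real (T * l))
      * (real (T * l) powr \<alpha> * (1 + ln (1 / \<delta>)) + ln (1 / \<sigma>))"
    and disp: "\<And>x. x \<in> E \<Longrightarrow>
      dispersed (\<lambda>i. induced_partition (discs l x i)) T (\<sigma> * real (T * l) powr (\<alpha> - 1)) k"
    using adaptive_smooth_law_dispersed[OF params \<open>0 \<le> \<alpha>\<close> law] by blast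
  have "1 \<le> exp 1 + real (T * l)"
    using exp_ge_add_one_self[of 1] of_nat_0_le_iff[of "T * l"] by linarith
  then have "ln (exp 1 + real (T * l)) powr 1 = ln (exp 1 + real (T * l))"
    by (intro powr_one ln_ge_zero)
  then show "\<exists>E \<in> sets P. measure P E \<ge> 1 - \<delta> \<and>
      (\<forall>x\<in>E. \<exists>k::nat.
         real k \<le> 30 * (ln (exp 1 + real (T * l))) powr 1 *
                   (real (T * l) powr \<alpha> * (1 + ln (1 / \<delta>)) + ln (1 / \<sigma>)) \<and>
         dispersed (\<lambda>i. induced_partition (discs l x i)) T (\<sigma> * real (T * l) powr (\<alpha> - 1)) k)"
    using E k disp by auto
qed simp_all

end
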